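(* Let $C\subseteq\mathbb{F}_q^n$ be a linear code and $(A,B)$ a $2$-power $t$-error locating pair for $C$. Let $\mathbf{y}=\mathbf{c}+\mathbf{e}$ with $\mathbf{c}\in C$, $\mathrm{w}(\mathbf{e})=t$, $I_{\mathbf{e}}=\mathrm{supp}(\mathbf{e})$, and $\mathbf{e}^{(1)}=\mathbf{e}$, $\mathbf{e}^{(2)}=\mathbf{y}^2-\mathbf{c}^2$. Let $M=M_1\cap M_2$ with $M_1=\{\mathbf{a}\in A\mid \langle \mathbf{a}*\mathbf{y},\mathbf{b}\rangle=0\ \forall \mathbf{b}\in B\}$, $M_2=\{\mathbf{a}\in A\mid \langle \mathbf{a}*\mathbf{y}^2,\mathbf{v}\rangle=0\ \forall \mathbf{v}\in (B^{\perp}*C)^{\perp}\}$. Then $$M_{I_{\mathbf{e}}}=\big((\mathbf{e}^{(1)}*B)_{I_{\mathbf{e}}}\big)^{\perp}\cap \big((\mathbf{e}^{(2)}*(B^\perp*C)^\perp)_{I_{\mathbf{e}}}\big)^{\perp},$$ duals taken in $\mathbb{F}_q^{|I_{\mathbf{e}}|}$.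
   Context: All codes are $\mathbb{F}_q$-linear subspaces of $\mathbb{F}_q^n$. $\mathbf{u}*\mathbf{v}=(u_1v_1,\dots,u_nv_n)$, $\mathbf{u}^i=(u_1^i,\dots,u_n^i)$; $A*B$ is the span of all $\mathbf{a}*\mathbf{b}$; $\mathbf{u}*X=\{\mathbf{u}*\mathbf{x}:\mathbf{x}\in X\}$; $\langle\mathbf{u},\mathbf{v}\rangle=\sum_iu_iv_i$, $X^\perp$ the dual. $\mathrm{w}$ Hamming weight, $\mathrm{d}$ minimum distance, $\mathrm{supp}(\mathbf{x})=\{i:x_i\ne0\}$. For $J=\{j_1<\dots<j_s\}$, $X_J=\{(x_{j_1},\dots,x_{j_s}):\mathbf{x}\in X\}$. A pair $(A,B)$ is a $2$-power $t$-error locating pair for $C$ if: (1) $A*B\subseteq C^\perp$; (2) $\dim A>t$; (3) $\mathrm{d}(A^\perp)>t$; (4) $\mathrm{d}(A)+\mathrm{d}(C)>n$; (5) $\dim B+\dim (B^\perp*C)^\perp\ge t$. *)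

theory Defs
  imports Main
begin

text \<open>Vectors of F_q^n are modelled as functions nat => 'a vanishing outside {0..<n};
 F_q is any finite field (type class finite + field).\<close>

definition vecs :: "nat \<Rightarrow> (nat \<Rightarrow> 'a::zero) set" where
  "vecs n = {x. \<forall>i. n \<le> i \<longrightarrow> x i = 0}"

definition is_code :: "nat \<Rightarrow> (nat \<Rightarrow> 'a::field) set \<Rightarrow> bool" where
  "is_code n X \<longleftrightarrow> X \<subseteq> vecs n \<and> (\<lambda>i. 0) \<in> X \<and>
     (\<forall>x\<in>X. \<forall>y\<in>X. (\<lambda>i. x i + y i) \<in> X) \<and>
     (\<forall>a. \<forall>x\<in>X. (\<lambda>i. a * x i) \<in> X)"

definition cspan :: "nat \<Rightarrow> (nat \<Rightarrow> 'a::field) set \<Rightarrow> (nat \<Rightarrow> 'a) set" where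
  "cspan n S = \<Inter>{V. is_code n V \<and> S \<subseteq> V}"

definition cdim :: "nat \<Rightarrow> (nat \<Rightarrow> 'a::field) set \<Rightarrow> nat" where
  "cdim n V = (LEAST k. \<exists>S. finite S \<and> card S = k \<and> S \<subseteq> V \<and> cspan n S = V)"

definition star :: "(nat \<Rightarrow> 'a::times) \<Rightarrow> (nat \<Rightarrow> 'a) \<Rightarrow> nat \<Rightarrow> 'a" where
  "star u v = (\<lambda>i. u i * v i)"

definition vpow :: "(nat \<Rightarrow> 'a::power) \<Rightarrow> nat \<Rightarrow> nat \<Rightarrow> 'a" where
  "vpow u k = (\<lambda>i. u i ^ k)"

definition star_code :: "nat \<Rightarrow> (nat \<Rightarrow> 'a::field) set \<Rightarrow> (nat \<Rightarrow> 'a) set \<Rightarrow> (nat \<Rightarrow> 'a) set" where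
  "star_code n A B = cspan n {star a b | a b. a \<in> A \<and> b \<in> B}"

definition inner :: "nat \<Rightarrow> (nat \<Rightarrow> 'a::comm_ring_1) \<Rightarrow> (nat \<Rightarrow> 'a) \<Rightarrow> 'a" where
  "inner n u v = (\<Sum>i<n. u i * v i)"

definition dual :: "nat \<Rightarrow> (nat \<Rightarrow> 'a::field) set \<Rightarrow> (nat \<Rightarrow> 'a) set" where
  "dual n X = {v \<in> vecs n. \<forall>x\<in>X. inner n x v = 0}"

definition supp :: "nat \<Rightarrow> (nat \<Rightarrow> 'a::zero) \<Rightarrow> nat set" where
  "supp n x = {i. i < n \<and> x i \<noteq> 0}"

definition weight :: "nat \<Rightarrow> (nat \<Rightarrow> 'a::zero) \<Rightarrow> nat" where
  "weight n x = card (supp n x)"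

text \<open>Minimum distance; convention d({0}) = n+1 (larger than any weight).\<close>
definition mindist :: "nat \<Rightarrow> (nat \<Rightarrow> 'a::zero) set \<Rightarrow> nat" where
  "mindist n X = (if \<forall>x\<in>X. weight n x = 0 then n + 1
                  else Min {weight n x | x. x \<in> X \<and> weight n x \<noteq> 0})"

text \<open>Puncturing X_J: restriction to coordinates in J (zero elsewhere); this is
 the natural isomorphic copy of X_J inside F_q^{|J|}.\<close>
definition punct :: "nat set \<Rightarrow> (nat \<Rightarrow> 'a::zero) set \<Rightarrow> (nat \<Rightarrow> 'a) set" where
  "punct J X = (\<lambda>x i. if i \<in> J then x i else 0) ` X"

text \<open>Dual inside F_q^{|J|}, with F_q^{|J|} represented as functions supported on J.\<close>
definition dual_on :: "nat set \<Rightarrow> (nat \<Rightarrow> 'a::field) set \<Rightarrow> (nat \<Rightarrow> 'a) set" where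
  "dual_on J Y = {v. (\<forall>i. i \<notin> J \<longrightarrow> v i = 0) \<and> (\<forall>y\<in>Y. (\<Sum>i\<in>J. y i * v i) = 0)}"

definition two_power_ELP :: "nat \<Rightarrow> nat \<Rightarrow> (nat \<Rightarrow> 'a::field) set \<Rightarrow> (nat \<Rightarrow> 'a) set
     \<Rightarrow> (nat \<Rightarrow> 'a) set \<Rightarrow> bool" where
  "two_power_ELP n t A B C \<longleftrightarrow>
     star_code n A B \<subseteq> dual n C \<and>
     cdim n A > t \<and>
     mindist n (dual n A) > t \<and>
     mindist n A + mindist n C > n \<and>
     cdim n B + cdim n (dual n (star_code n (dual n B) C)) \<ge> t"

end

theory Submission imports Defs begin

text \<open>On the error support \<open>I\<close> the two syndrome conditions only see the error:
  \<open>\<langle>a*y, b\<rangle> = \<langle>a*e, b\<rangle>\<close> because \<open>a*b \<in> C\<^sup>\<bottom>\<close>, and, with \<open>e\<^sub>2 = y\<^sup>2 - c\<^sup>2\<close>,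
  \<open>\<langle>a*y\<^sup>2, v\<rangle> = \<langle>a*e\<^sub>2, v\<rangle>\<close> because \<open>a*c \<in> B\<^sup>\<bottom>\<close>, so \<open>a*c*c \<in> B\<^sup>\<bottom>*C\<close>. As \<open>e\<close> and \<open>e\<^sub>2\<close>
  vanish outside \<open>I\<close>, both conditions depend only on the puncture \<open>a\<^sub>I\<close> and say that it
  is orthogonal to \<open>(e*B)\<^sub>I\<close> and \<open>(e\<^sub>2*(B\<^sup>\<bottom>*C)\<^sup>\<bottom>)\<^sub>I\<close>. Every vector supported on \<open>I\<close>
  is such a puncture, since \<open>A\<^sub>I\<close> has trivial dual in \<open>F\<^sup>I\<close>: a nonzero vector of it would
  be a codeword of \<open>A\<^sup>\<bottom>\<close> of weight at most \<open>|I| = t < d(A\<^sup>\<bottom>)\<close>. Only conditions (1) and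
  (3) of the error-locating pair are used.\<close>

definition is_subspace :: "(nat \<Rightarrow> 'a::field) set \<Rightarrow> bool" where
  "is_subspace W \<longleftrightarrow> (\<lambda>i. 0) \<in> W \<and> (\<forall>x\<in>W. \<forall>y\<in>W. (\<lambda>i. x i + y i) \<in> W) \<and>
     (\<forall>a. \<forall>x\<in>W. (\<lambda>i. a * x i) \<in> W)"

definition vanish_outside :: "nat set \<Rightarrow> (nat \<Rightarrow> 'a::zero) set" where
  "vanish_outside J = {v. \<forall>i. i \<notin> J \<longrightarrow> v i = 0}"

definition puncture :: "nat set \<Rightarrow> (nat \<Rightarrow> 'a::zero) \<Rightarrow> nat \<Rightarrow> 'a" where
  "puncture J x = (\<lambda>i. if i \<in> J then x i else 0)"

lemma is_code_iff_subspace: "is_code n X \<longleftrightarrow> X \<subseteq> vecs n \<and> is_subspace X"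
  by (auto simp: is_code_def is_subspace_def)

lemma is_subspace_add_scaled:
  assumes "is_subspace W" "x \<in> W" "y \<in> W"
  shows "(\<lambda>i. x i + a * y i) \<in> W"
proof -
  have "(\<lambda>i. a * y i) \<in> W"
    using assms(1,3) by (simp add: is_subspace_def)
  with assms(1,2) show ?thesis
    unfolding is_subspace_def by fastforce
qed

lemma is_subspace_scaled: "is_subspace W \<Longrightarrow> x \<in> W \<Longrightarrow> (\<lambda>i. a * x i) \<in> W"
  unfolding is_subspace_def by blast

lemma punct_eq_image_puncture: "punct J X = puncture J ` X"
  by (simp add: punct_def puncture_def)

lemma puncture_mem_vanish_outside: "puncture J x \<in> vanish_outside J"
  by (simp add: puncture_def vanish_outside_def)

lemma dual_on_subset_vanish_outside: "dual_on J Y \<subseteq> vanish_outside J"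
  by (auto simp: dual_on_def vanish_outside_def)

lemma is_subspace_image_puncture: "is_subspace W \<Longrightarrow> is_subspace (puncture J ` W)"
  unfolding is_subspace_def
proof (intro conjI ballI allI)
  assume W: "(\<lambda>i. 0) \<in> W \<and> (\<forall>x\<in>W. \<forall>y\<in>W. (\<lambda>i. x i + y i) \<in> W) \<and> (\<forall>a. \<forall>x\<in>W. (\<lambda>i. a * x i) \<in> W)"
  show "(\<lambda>i. 0) \<in> puncture J ` W"
    using W image_eqI[of "\<lambda>i. 0" "puncture J" "\<lambda>i. 0"] by (auto simp: puncture_def)
  fix x y a assume "x \<in> puncture J ` W" "y \<in> puncture J ` W"
  then obtain u v where "u \<in> W" "v \<in> W" "x = puncture J u" "y = puncture J v" by blast
  moreover have "(\<lambda>i. puncture J u i + puncture J v i) = puncture J (\<lambda>i. u i + v i)"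
    and "(\<lambda>i. a * puncture J u i) = puncture J (\<lambda>i. a * u i)"
    by (auto simp: puncture_def)
  ultimately show "(\<lambda>i. x i + y i) \<in> puncture J ` W" and "(\<lambda>i. a * x i) \<in> puncture J ` W"
    using W by auto
qed

lemma inner_eq_sum_on:
  assumes "I \<subseteq> {..<n}" "\<And>i. i \<notin> I \<Longrightarrow> x i * y i = 0"
  shows "inner n x y = (\<Sum>i\<in>I. x i * y i)"
  unfolding inner_def by (rule sum.mono_neutral_right) (use assms in auto)

lemma dual_on_trivial_imp_nonzero_coord:
  assumes "finite J" "j \<in> J" "dual_on J W \<subseteq> {\<lambda>i. 0}"
  obtains w where "w \<in> W" "w j \<noteq> 0"
proof -
  define \<delta> :: "nat \<Rightarrow> 'a" where "\<delta> = (\<lambda>i. if i = j then 1 else 0)"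
  have "\<delta> j \<noteq> 0"
    by (simp add: \<delta>_def)
  then have "\<delta> \<notin> dual_on J W"
    using assms(3) by auto
  moreover have "(\<Sum>i\<in>J. w i * \<delta> i) = w j" for w
    using assms(1,2) by (simp add: \<delta>_def if_distrib cong: if_cong)
  moreover have "\<delta> \<in> vanish_outside J"
    using assms(2) by (auto simp: vanish_outside_def \<delta>_def)
  ultimately have "\<exists>w\<in>W. w j \<noteq> 0"
    by (auto simp: dual_on_def vanish_outside_def)
  with that show thesis by blast
qed

text \<open>If \<open>w\<^sub>1 \<in> W\<close> has \<open>w\<^sub>1 j = 1\<close>, a vector orthogonal to the hyperplane section
  \<open>{w \<in> W. w j = 0}\<close> extends, by a suitable value at \<open>j\<close>, to one orthogonal to all of \<open>W\<close>.\<close>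
lemma dual_on_hyperplane_section_trivial:
  assumes "finite J" "j \<notin> J" "is_subspace W" "w1 \<in> W" "w1 j = 1"
    and "dual_on (insert j J) W \<subseteq> {\<lambda>i. 0}"
  shows "dual_on J {w \<in> W. w j = 0} \<subseteq> {\<lambda>i. 0}"
proof
  fix u assume u: "u \<in> dual_on J {w \<in> W. w j = 0}"
  define s where "s = (\<Sum>i\<in>J. w1 i * u i)"
  define u' where "u' = u(j := - s)"
  have "(\<Sum>i\<in>insert j J. w i * u' i) = 0" if "w \<in> W" for w
  proof -
    have "(\<lambda>i. w i + (- w j) * w1 i) \<in> W"
      by (rule is_subspace_add_scaled[OF assms(3) that assms(4)])
    then have "(\<lambda>i. w i + (- w j) * w1 i) \<in> {w \<in> W. w j = 0}"
      using assms(5) by simp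
    then have "(\<Sum>i\<in>J. (w i + (- w j) * w1 i) * u i) = 0"
      using u by (simp add: dual_on_def)
    then have "(\<Sum>i\<in>J. w i * u i) = w j * s"
      by (simp add: s_def algebra_simps sum.distrib sum_distrib_left sum_subtractf)
    moreover have "(\<Sum>i\<in>insert j J. w i * u' i) = w j * (- s) + (\<Sum>i\<in>J. w i * u i)"
      using assms(1,2) by (simp add: u'_def, intro sum.cong) auto
    ultimately show ?thesis by simp
  qed
  moreover have "u' \<in> vanish_outside (insert j J)"
    using u by (auto simp: u'_def dual_on_def vanish_outside_def)
  ultimately have "u' = (\<lambda>i. 0)"
    using assms(6) by (auto simp: dual_on_def vanish_outside_def)
  moreover have "u j = 0"
    using u assms(2) by (simp add: dual_on_def)
  ultimately show "u \<in> {\<lambda>i. 0}"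
    by (auto simp: u'_def fun_eq_iff split: if_splits)
qed

lemma vanish_outside_subset_if_dual_on_trivial:
  fixes W :: "(nat \<Rightarrow> 'a::field) set"
  assumes "finite J" "is_subspace W" "W \<subseteq> vanish_outside J" "dual_on J W \<subseteq> {\<lambda>i. 0}"
  shows "vanish_outside J \<subseteq> W"
  using assms
proof (induction J arbitrary: W rule: finite_induct)
  case empty
  have "vanish_outside {} = {\<lambda>i. 0 :: 'a}"
    by (auto simp: vanish_outside_def)
  then show ?case
    using empty.prems(1) by (simp add: is_subspace_def)
next
  case (insert j J W)
  obtain w where w: "w \<in> W" "w j \<noteq> 0"
    using dual_on_trivial_imp_nonzero_coord[OF _ _ insert.prems(3)] insert.hyps(1) by blast
  define w1 where "w1 = (\<lambda>i. inverse (w j) * w i)"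
  have w1: "w1 \<in> W" "w1 j = 1"
    using w is_subspace_scaled[OF insert.prems(1)] by (simp_all add: w1_def)
  define W0 where "W0 = {w \<in> W. w j = 0}"
  have "is_subspace W0"
    using insert.prems(1) unfolding W0_def is_subspace_def by auto
  moreover have "W0 \<subseteq> vanish_outside J"
    using insert.prems(2) by (auto simp: W0_def vanish_outside_def)
  moreover have "dual_on J W0 \<subseteq> {\<lambda>i. 0}"
    unfolding W0_def
    by (rule dual_on_hyperplane_section_trivial[OF insert.hyps(1,2) insert.prems(1) w1 insert.prems(3)])
  ultimately have W0: "vanish_outside J \<subseteq> W0"
    by (rule insert.IH)
  show ?case
  proof
    fix v :: "nat \<Rightarrow> 'a" assume v: "v \<in> vanish_outside (insert j J)"
    have "w1 \<in> vanish_outside (insert j J)"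
      using w1(1) insert.prems(2) by blast
    have "(\<lambda>i. v i + (- v j) * w1 i) \<in> vanish_outside J"
      unfolding vanish_outside_def
    proof (intro CollectI allI impI)
      fix i assume "i \<notin> J"
      then show "v i + - v j * w1 i = 0"
        using v \<open>w1 \<in> vanish_outside (insert j J)\<close> w1(2)
        by (cases "i = j") (auto simp: vanish_outside_def)
    qed
    then have "(\<lambda>i. v i + (- v j) * w1 i) \<in> W"
      using W0 by (auto simp: W0_def)
    from is_subspace_add_scaled[OF insert.prems(1) this w1(1), of "v j"]
    show "v \<in> W" by simp
  qed
qed

lemma weight_le: "weight n x \<le> n"
proof -
  have "supp n x \<subseteq> {..<n}" by (auto simp: supp_def)
  then show ?thesis unfolding weight_def using card_mono[OF finite_lessThan] by fastforce
qed

lemma mindist_le_weight: "x \<in> X \<Longrightarrow> weight n x \<noteq> 0 \<Longrightarrow> mindist n X \<le> weight n x"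
proof -
  assume x: "x \<in> X" "weight n x \<noteq> 0"
  have "finite {weight n x | x. x \<in> X \<and> weight n x \<noteq> 0}"
    by (rule finite_subset[of _ "{..n}"]) (auto simp: weight_le)
  then show ?thesis
    unfolding mindist_def using x by (auto intro: Min_le)
qed

lemma dual_on_puncture_trivial:
  assumes "I \<subseteq> {..<n}" "card I < mindist n (dual n A)"
  shows "dual_on I (puncture I ` A) \<subseteq> {\<lambda>i. 0}"
proof
  fix u assume u: "u \<in> dual_on I (puncture I ` A)"
  then have u_out: "u i = 0" if "i \<notin> I" for i
    using that by (simp add: dual_on_def)
  have "inner n x u = 0" if "x \<in> A" for x
  proof -
    have "inner n x u = (\<Sum>i\<in>I. x i * u i)"
      by (rule inner_eq_sum_on[OF assms(1)]) (simp add: u_out)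
    also have "\<dots> = (\<Sum>i\<in>I. puncture I x i * u i)"
      by (rule sum.cong) (simp_all add: puncture_def)
    finally show ?thesis using u that by (simp add: dual_on_def)
  qed
  moreover have "u \<in> vecs n"
    unfolding vecs_def
  proof (intro CollectI allI impI)
    fix i assume "n \<le> i"
    then have "i \<notin> I" using assms(1) by auto
    then show "u i = 0" by (rule u_out)
  qed
  ultimately have "u \<in> dual n A"
    by (simp add: dual_def)
  moreover have supp: "supp n u \<subseteq> I"
    using u_out by (auto simp: supp_def)
  then have "weight n u \<le> card I"
    unfolding weight_def using assms(1) by (simp add: card_mono finite_subset)
  ultimately have "weight n u = 0"
    using assms(2) mindist_le_weight[of u "dual n A" n] by (cases "weight n u = 0") simp_all
  moreover have "finite (supp n u)"
    by (rule finite_subset[of _ "{..<n}"]) (auto simp: supp_def)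
  ultimately have "supp n u = {}"
    by (simp add: weight_def)
  then have "u i = 0" for i
    using u_out assms(1) by (cases "i \<in> I") (auto simp: supp_def)
  then show "u \<in> {\<lambda>i. 0}"
    by auto
qed

lemma puncture_image_eq_vanish_outside:
  assumes "is_subspace A" "I \<subseteq> {..<n}" "card I < mindist n (dual n A)"
  shows "puncture I ` A = vanish_outside I"
proof
  show "puncture I ` A \<subseteq> vanish_outside I"
    by (auto simp: puncture_mem_vanish_outside)
  show "vanish_outside I \<subseteq> puncture I ` A"
  proof (rule vanish_outside_subset_if_dual_on_trivial)
    show "finite I"
      using assms(2) finite_subset by blast
    show "is_subspace (puncture I ` A)"
      using assms(1) by (rule is_subspace_image_puncture)
    show "puncture I ` A \<subseteq> vanish_outside I"
      by (auto simp: puncture_mem_vanish_outside)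
    show "dual_on I (puncture I ` A) \<subseteq> {\<lambda>i. 0}"
      using assms(2,3) by (rule dual_on_puncture_trivial)
  qed
qed

lemma puncture_mem_dual_on_iff:
  assumes "I \<subseteq> {..<n}" "x \<in> vanish_outside I"
  shows "puncture I a \<in> dual_on I (puncture I ` star x ` S) \<longleftrightarrow> (\<forall>s\<in>S. inner n (star a x) s = 0)"
proof -
  have "inner n (star a x) s = (\<Sum>i\<in>I. star a x i * s i)" for s
    by (rule inner_eq_sum_on[OF assms(1)]) (use assms(2) in \<open>simp add: star_def vanish_outside_def\<close>)
  also have "\<dots> s = (\<Sum>i\<in>I. puncture I (star x s) i * puncture I a i)" for s
    by (rule sum.cong) (simp_all add: puncture_def star_def)
  finally have "inner n (star a x) s = (\<Sum>i\<in>I. puncture I (star x s) i * puncture I a i)" for s .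
  moreover have "puncture I a \<in> vanish_outside I"
    by (rule puncture_mem_vanish_outside)
  ultimately show ?thesis
    by (auto simp: dual_on_def vanish_outside_def)
qed

lemma star_mem_star_code: "a \<in> A \<Longrightarrow> b \<in> B \<Longrightarrow> star a b \<in> star_code n A B"
  unfolding star_code_def cspan_def by blast

lemma inner_star_add_codeword:
  assumes "star_code n A B \<subseteq> dual n C" "c \<in> C" "a \<in> A" "b \<in> B"
  shows "inner n (star a (\<lambda>i. c i + e i)) b = inner n (star a e) b"
proof -
  have "inner n c (star a b) = 0"
    using assms star_mem_star_code[of a A b B n] by (auto simp: dual_def)
  moreover have "inner n (star a (\<lambda>i. c i + e i)) b = inner n c (star a b) + inner n (star a e) b"
    by (simp add: inner_def star_def sum.distrib[symmetric] algebra_simps)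
  ultimately show ?thesis by simp
qed

lemma star_codeword_mem_dual:
  assumes "star_code n A B \<subseteq> dual n C" "c \<in> C" "C \<subseteq> vecs n" "a \<in> A"
  shows "star a c \<in> dual n B"
proof -
  have "inner n b (star a c) = inner n c (star a b)" for b
    by (simp add: inner_def star_def mult_ac)
  then have "inner n b (star a c) = 0" if "b \<in> B" for b
    using assms that star_mem_star_code[of a A b B n] by (auto simp: dual_def)
  moreover have "star a c \<in> vecs n"
    using assms(2,3) by (auto simp: vecs_def star_def)
  ultimately show ?thesis by (simp add: dual_def)
qed

lemma inner_star_square_sub_codeword:
  assumes "star_code n A B \<subseteq> dual n C" "c \<in> C" "C \<subseteq> vecs n" "a \<in> A"
    and "v \<in> dual n (star_code n (dual n B) C)"
  shows "inner n (star a (vpow y 2)) v = inner n (star a (\<lambda>i. vpow y 2 i - vpow c 2 i)) v"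
proof -
  have "star (star a c) c \<in> star_code n (dual n B) C"
    using assms star_codeword_mem_dual star_mem_star_code by metis
  then have "inner n (star (star a c) c) v = 0"
    using assms(5) by (simp add: dual_def)
  moreover have "inner n (star a (vpow y 2)) v
      = inner n (star (star a c) c) v + inner n (star a (\<lambda>i. vpow y 2 i - vpow c 2 i)) v"
    by (simp add: inner_def star_def vpow_def sum.distrib[symmetric] algebra_simps power2_eq_square)
  ultimately show ?thesis by simp
qed

theorem mainTheorem6:
  fixes n t :: nat and A B C :: "(nat \<Rightarrow> 'a::{finite,field}) set"
    and c e y e2 :: "nat \<Rightarrow> 'a" and I :: "nat set"
    and M1 M2 M :: "(nat \<Rightarrow> 'a) set"
  assumes "is_code n C" and "is_code n A" and "is_code n B"
    and "two_power_ELP n t A B C"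
    and "c \<in> C" and "e \<in> vecs n" and "weight n e = t"
  defines "y \<equiv> (\<lambda>i. c i + e i)"
    and "I \<equiv> supp n e"
    and "e2 \<equiv> (\<lambda>i. vpow y 2 i - vpow c 2 i)"
    and "M1 \<equiv> {a \<in> A. \<forall>b\<in>B. inner n (star a y) b = 0}"
    and "M2 \<equiv> {a \<in> A. \<forall>v\<in>dual n (star_code n (dual n B) C). inner n (star a (vpow y 2)) v = 0}"
    and "M \<equiv> M1 \<inter> M2"
  shows "punct I M =
           dual_on I (punct I (star e ` B)) \<inter>
           dual_on I (punct I (star e2 ` dual n (star_code n (dual n B) C)))"
proof -
  define D where "D = dual n (star_code n (dual n B) C)"
  define R where "R = dual_on I (puncture I ` star e ` B) \<inter> dual_on I (puncture I ` star e2 ` D)"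
  have C: "C \<subseteq> vecs n" and A: "is_subspace A"
    using assms(1,2) by (simp_all add: is_code_iff_subspace)
  have AB: "star_code n A B \<subseteq> dual n C" and t: "t < mindist n (dual n A)"
    using assms(4) by (simp_all add: two_power_ELP_def)
  have I: "I \<subseteq> {..<n}" "card I = t"
    using assms(7) by (auto simp: I_def supp_def weight_def)
  have e: "e \<in> vanish_outside I" and e2: "e2 \<in> vanish_outside I"
    using assms(6) by (auto simp: vanish_outside_def I_def supp_def vecs_def e2_def y_def vpow_def)
  have "a \<in> M \<longleftrightarrow> puncture I a \<in> R" if "a \<in> A" for a
  proof -
    have "a \<in> M1 \<longleftrightarrow> puncture I a \<in> dual_on I (puncture I ` star e ` B)"
      using that inner_star_add_codeword[OF AB assms(5) that]
      by (simp add: M1_def y_def puncture_mem_dual_on_iff[OF I(1) e])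
    moreover have "a \<in> M2 \<longleftrightarrow> puncture I a \<in> dual_on I (puncture I ` star e2 ` D)"
      using that inner_star_square_sub_codeword[OF AB assms(5) C that, where y = y, folded e2_def]
      by (simp add: M2_def D_def puncture_mem_dual_on_iff[OF I(1) e2])
    ultimately show ?thesis
      by (simp add: M_def R_def)
  qed
  moreover have "R \<subseteq> puncture I ` A"
    using puncture_image_eq_vanish_outside[OF A I(1)] t I(2)
      dual_on_subset_vanish_outside[of I "puncture I ` star e ` B"]
    unfolding R_def by blast
  moreover have "M \<subseteq> A"
    by (auto simp: M_def M1_def)
  ultimately show ?thesis
    unfolding punct_eq_image_puncture D_def[symmetric] R_def[symmetric] by blast
qed

end
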